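(* Let $a\ge3$ be an integer. In the graded cluster algebra $\mathcal{A}\Big((x_1,x_2,x_3),\begin{pmatrix}0&a&-2\\-a&0&a\\2&-a&0\end{pmatrix},(a,2,a)\Big)$ there are infinitely many degrees each of which is the degree of infinitely many distinct cluster variables.
   Context: Graded cluster algebras: for a $3\times3$ skew-symmetric integer matrix $B=(b_{ij})$, $\mu_k(B)=(b'_{ij})$ with $b'_{ij}=-b_{ij}$ if $i=k$ or $j=k$, $b'_{ij}=b_{ij}+\operatorname{sgn}(b_{ik})\max(b_{ik}b_{kj},0)$ otherwise. A seed $((x_1,x_2,x_3),B)$ mutates in direction $k$ to $(x',\mu_k B)$ with $x'_j=x_j$ ($j\ne k$), $x'_k=\big(\prod_{b_{ik}>0}x_i^{b_{ik}}+\prod_{b_{ik}<0}x_i^{-b_{ik}}\big)/x_k$. Cluster variables are all entries of reachable clusters; $\mathcal{A}(x,B,g)$ is graded by $\deg x_i=g_i$ where $Bg=0$; under mutation at $k$ the degree vector becomes $g'$ with $g'_j=g_j$ ($j\ne k$), $g'_k=-g_k+\sum_{b_{ik}>0}b_{ik}g_i$; every cluster variable is homogeneous. *)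

theory Defs
  imports "HOL-Computational_Algebra.Polynomial" "HOL-Computational_Algebra.Fraction_Field"
begin

text \<open>The ambient field Q(x1,x2,x3), realised as the fraction field of Z[x1,x2,x3]
  (iterated univariate polynomials). Indices 1,2,3 of the paper are 0,1,2 here.\<close>

type_synonym rf = "int poly poly poly fract"

definition X0 :: rf where "X0 = Fract [:[:[:0,1:]:]:] 1"
definition X1 :: rf where "X1 = Fract [:[:0,1:]:] 1"
definition X2 :: rf where "X2 = Fract [:0,1:] 1"

definition init_cluster :: "nat \<Rightarrow> rf" where
  "init_cluster i = (if i = 0 then X0 else if i = 1 then X1 else X2)"

type_synonym mat = "nat \<Rightarrow> nat \<Rightarrow> int"

definition mut_mat :: "nat \<Rightarrow> mat \<Rightarrow> mat" where
  "mut_mat k B i j =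
     (if i = k \<or> j = k then - B i j
      else B i j + sgn (B i k) * max (B i k * B k j) 0)"

type_synonym seed = "(nat \<Rightarrow> rf) \<times> mat \<times> (nat \<Rightarrow> int)"

definition mutate :: "nat \<Rightarrow> seed \<Rightarrow> seed" where
  "mutate k s = (case s of (x, B, g) \<Rightarrow>
     (x(k := ((\<Prod>i\<in>{i. i < 3 \<and> B i k > 0}. x i ^ nat (B i k))
              + (\<Prod>i\<in>{i. i < 3 \<and> B i k < 0}. x i ^ nat (- B i k))) / x k),
      mut_mat k B,
      g(k := - g k + (\<Sum>i\<in>{i. i < 3 \<and> B i k > 0}. B i k * g i))))"

definition mutate_seq :: "nat list \<Rightarrow> seed \<Rightarrow> seed" where
  "mutate_seq ks s = fold mutate ks s"

definition reachable_seeds :: "seed \<Rightarrow> seed set" where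
  "reachable_seeds s0 = {mutate_seq ks s0 | ks. set ks \<subseteq> {0,1,2}}"

definition graded_cluster_vars :: "seed \<Rightarrow> (rf \<times> int) set" where
  "graded_cluster_vars s0 =
     {(x i, g i) | x B g i. (x, B, g) \<in> reachable_seeds s0 \<and> i < 3}"

definition Bmat :: "int \<Rightarrow> mat" where
  "Bmat a i j =
     (if (i, j) = (0, 1) then a else if (i, j) = (0, 2) then -2
      else if (i, j) = (1, 0) then -a else if (i, j) = (1, 2) then a
      else if (i, j) = (2, 0) then 2 else if (i, j) = (2, 1) then -a else 0)"

definition gvec :: "int \<Rightarrow> nat \<Rightarrow> int" where
  "gvec a i = (if i = 1 then 2 else a)"

end

theory Submission
  imports Defs
begin

text \<open>
  All seeds met below have the form (x, \<plusminus>C(w), w), where C(w) is the exchange matrix of the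
  oriented 3-cycle 0 \<rightarrow> 1 \<rightarrow> 2 \<rightarrow> 0 carrying the weight w i on the arrow opposite vertex i.
  Mutation at k flips the sign and replaces w k by the product of the other two weights minus
  w k, and the degree vector always equals the weight vector; the initial seed is
  (x, C(a,2,a), (a,2,a)). Mutating alternately at 0 and 2 fixes the weights while the value of
  x 0 at the point (1,1,2) grows without bound. Mutating afterwards alternately at 1 and 0
  makes the degree of x 0 increase strictly and never decreases its value. Since the exchange
  relations are subtraction-free, all values stay positive and the evaluation stays defined, so
  each of these infinitely many degrees carries cluster variables of arbitrarily large value.
\<close>

text \<open>Evaluation at X0 = c 0, X1 = c 1, X2 = c 2 (X2 is the outermost polynomial variable).\<close>

definition peval :: "(nat \<Rightarrow> int) \<Rightarrow> int poly poly poly \<Rightarrow> int" where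
  "peval c p = poly (poly (poly p [:[:c 2:]:]) [:c 1:]) (c 0)"

lemma peval_add [simp]: "peval c (p + q) = peval c p + peval c q"
  and peval_mult [simp]: "peval c (p * q) = peval c p * peval c q"
  and peval_zero [simp]: "peval c 0 = 0"
  and peval_one [simp]: "peval c 1 = 1"
  by (simp_all add: peval_def)

definition has_value :: "(nat \<Rightarrow> int) \<Rightarrow> rf \<Rightarrow> real \<Rightarrow> bool" where
  "has_value c u r \<longleftrightarrow>
     (\<exists>p q. peval c q \<noteq> 0 \<and> u = Fract p q \<and> r = of_int (peval c p) / of_int (peval c q))"

lemma has_valueE:
  assumes "has_value c u r"
  obtains p q where "q \<noteq> 0" "peval c q \<noteq> 0" "u = Fract p q"
    "r = of_int (peval c p) / of_int (peval c q)"
  using assms unfolding has_value_def by (metis peval_zero)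

lemma has_value_unique:
  assumes "has_value c u r" "has_value c u s"
  shows "r = s"
proof -
  obtain p q where A: "q \<noteq> 0" "peval c q \<noteq> 0" "u = Fract p q"
      "r = of_int (peval c p) / of_int (peval c q)"
    using assms(1) by (rule has_valueE)
  obtain p' q' where B: "q' \<noteq> 0" "peval c q' \<noteq> 0" "u = Fract p' q'"
      "s = of_int (peval c p') / of_int (peval c q')"
    using assms(2) by (rule has_valueE)
  have "p * q' = p' * q"
    using A B eq_fract(1) by metis
  then have "of_int (peval c p) * of_int (peval c q') = (of_int (peval c p') * of_int (peval c q) :: real)"
    by (metis peval_mult of_int_mult)
  then show ?thesis
    using A B by (simp add: frac_eq_eq)
qed

lemma has_value_add:
  assumes "has_value c u r" "has_value c w s"
  shows "has_value c (u + w) (r + s)"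
proof -
  obtain p q where A: "q \<noteq> 0" "peval c q \<noteq> 0" "u = Fract p q"
      "r = of_int (peval c p) / of_int (peval c q)"
    using assms(1) by (rule has_valueE)
  obtain p' q' where B: "q' \<noteq> 0" "peval c q' \<noteq> 0" "w = Fract p' q'"
      "s = of_int (peval c p') / of_int (peval c q')"
    using assms(2) by (rule has_valueE)
  show ?thesis
    unfolding has_value_def
    by (rule exI[of _ "p * q' + p' * q"], rule exI[of _ "q * q'"])
      (use A(1-3) B(1-3) in \<open>simp add: A(4) B(4) field_simps\<close>)
qed

lemma has_value_mult:
  assumes "has_value c u r" "has_value c w s"
  shows "has_value c (u * w) (r * s)"
proof -
  obtain p q where A: "q \<noteq> 0" "peval c q \<noteq> 0" "u = Fract p q"
      "r = of_int (peval c p) / of_int (peval c q)"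
    using assms(1) by (rule has_valueE)
  obtain p' q' where B: "q' \<noteq> 0" "peval c q' \<noteq> 0" "w = Fract p' q'"
      "s = of_int (peval c p') / of_int (peval c q')"
    using assms(2) by (rule has_valueE)
  show ?thesis
    unfolding has_value_def
    by (rule exI[of _ "p * p'"], rule exI[of _ "q * q'"])
      (use A(1-3) B(1-3) in \<open>simp add: A(4) B(4)\<close>)
qed

lemma has_value_divide:
  assumes "has_value c u r" "has_value c w s" "s \<noteq> 0"
  shows "has_value c (u / w) (r / s)"
proof -
  obtain p q where A: "q \<noteq> 0" "peval c q \<noteq> 0" "u = Fract p q"
      "r = of_int (peval c p) / of_int (peval c q)"
    using assms(1) by (rule has_valueE)
  obtain p' q' where B: "q' \<noteq> 0" "peval c q' \<noteq> 0" "w = Fract p' q'"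
      "s = of_int (peval c p') / of_int (peval c q')"
    using assms(2) by (rule has_valueE)
  have "peval c p' \<noteq> 0"
    using B assms(3) by auto
  then have "p' \<noteq> 0"
    by auto
  show ?thesis
    unfolding has_value_def
    by (rule exI[of _ "p * q'"], rule exI[of _ "q * p'"])
       (use A(1-3) B(1-3) \<open>p' \<noteq> 0\<close> \<open>peval c p' \<noteq> 0\<close> in \<open>simp add: A(4) B(4)\<close>)
qed

lemma has_value_Fract:
  "peval c q \<noteq> 0 \<Longrightarrow> has_value c (Fract p q) (of_int (peval c p) / of_int (peval c q))"
  unfolding has_value_def by blast

lemma has_value_zero: "has_value c 0 0"
  and has_value_one: "has_value c 1 1"
  using has_value_Fract[of c 1 0] has_value_Fract[of c 1 1]
  by (simp_all add: Zero_fract_def One_fract_def)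

lemma has_value_power: "has_value c u r \<Longrightarrow> has_value c (u ^ n) (r ^ n)"
  by (induction n) (auto intro: has_value_mult has_value_one)

lemma has_value_sum:
  "finite I \<Longrightarrow> (\<And>i. i \<in> I \<Longrightarrow> has_value c (u i) (r i)) \<Longrightarrow> has_value c (\<Sum>i\<in>I. u i) (\<Sum>i\<in>I. r i)"
  by (induction I rule: finite_induct) (auto intro: has_value_add has_value_zero)

lemma has_value_init_cluster:
  assumes "i < 3"
  shows "has_value c (init_cluster i) (c i)"
proof -
  have "i = 0 \<or> i = 1 \<or> i = 2"
    using assms by auto
  then show ?thesis
    using has_value_Fract[of c 1 "[:[:[:0, 1:]:]:]"] has_value_Fract[of c 1 "[:[:0, 1:]:]"]
      has_value_Fract[of c 1 "[:0, 1:]"]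
    by (auto simp: init_cluster_def X0_def X1_def X2_def peval_def)
qed

text \<open>The arrow of the 3-cycle 0 \<rightarrow> 1 \<rightarrow> 2 \<rightarrow> 0 that is opposite vertex i has weight w i.\<close>

definition cyclic_mat :: "(nat \<Rightarrow> int) \<Rightarrow> mat" where
  "cyclic_mat w i j =
     (if (i, j) = (0, 1) then w 2 else if (i, j) = (1, 0) then - w 2
      else if (i, j) = (1, 2) then w 0 else if (i, j) = (2, 1) then - w 0
      else if (i, j) = (2, 0) then w 1 else if (i, j) = (0, 2) then - w 1 else 0)"

definition mut_weights :: "nat \<Rightarrow> (nat \<Rightarrow> int) \<Rightarrow> nat \<Rightarrow> int" where
  "mut_weights k w = w(k := (\<Prod>i\<in>{i. i < 3 \<and> i \<noteq> k}. w i) - w k)"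

text \<open>
  Mutation of a seed of the form (x, \<plusminus>C(w), w), over an arbitrary field: over rf it computes
  cluster variables, over the reals their values. In the exchange binomial, x i is raised to the
  weight of the arrow joining i and k, which is the arrow opposite vertex 3 - k - i.
\<close>

definition exchange :: "nat \<Rightarrow> (nat \<Rightarrow> int) \<Rightarrow> (nat \<Rightarrow> 'a::field) \<Rightarrow> 'a" where
  "exchange k w x = (\<Sum>i\<in>{i. i < 3 \<and> i \<noteq> k}. x i ^ nat (w (3 - k - i))) / x k"

definition mutate_cyclic ::
  "nat \<Rightarrow> (nat \<Rightarrow> 'a::field) \<times> (nat \<Rightarrow> int) \<Rightarrow> (nat \<Rightarrow> 'a) \<times> (nat \<Rightarrow> int)" where
  "mutate_cyclic k s = ((fst s)(k := exchange k (snd s) (fst s)), mut_weights k (snd s))"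

definition cyclic_seed :: "int \<Rightarrow> (nat \<Rightarrow> rf) \<times> (nat \<Rightarrow> int) \<Rightarrow> seed" where
  "cyclic_seed \<sigma> s = (fst s, \<lambda>i j. \<sigma> * cyclic_mat (snd s) i j, snd s)"

lemma other_indices:
  "{i::nat. i < 3 \<and> i \<noteq> 0} = {1, 2}"
  "{i::nat. i < 3 \<and> i \<noteq> 1} = {0, 2}"
  "{i::nat. i < 3 \<and> i \<noteq> 2} = {0, 1}"
  by auto

lemma exchange_simps:
  "exchange 0 w x = (x 1 ^ nat (w 2) + x 2 ^ nat (w 1)) / x 0"
  "exchange 1 w x = (x 0 ^ nat (w 2) + x 2 ^ nat (w 0)) / x 1"
  "exchange 2 w x = (x 0 ^ nat (w 1) + x 1 ^ nat (w 0)) / x 2"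
  unfolding exchange_def other_indices by simp_all

lemma mut_weights_simps:
  "mut_weights 0 w = w(0 := w 1 * w 2 - w 0)"
  "mut_weights 1 w = w(1 := w 0 * w 2 - w 1)"
  "mut_weights 2 w = w(2 := w 0 * w 1 - w 2)"
  unfolding mut_weights_def other_indices by simp_all

lemma snd_mutate_cyclic [simp]: "snd (mutate_cyclic k s) = mut_weights k (snd s)"
  by (simp add: mutate_cyclic_def)

lemma mut_mat_cyclic:
  assumes "k < 3" "\<sigma> = 1 \<or> \<sigma> = -1" "\<forall>i<3. i \<noteq> k \<longrightarrow> 0 < w i"
  shows "mut_mat k (\<lambda>i j. \<sigma> * cyclic_mat w i j)
    = (\<lambda>i j. - \<sigma> * cyclic_mat (mut_weights k w) i j)"
proof -
  have "k = 0 \<or> k = 1 \<or> k = 2"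
    using assms(1) by auto
  with assms(2,3) show ?thesis
    by (elim disjE; hypsubst; unfold mut_weights_simps; intro ext;
        simp add: mut_mat_def cyclic_mat_def sgn_mult algebra_simps)
qed

lemma cyclic_neighbours:
  fixes k :: nat
  assumes "k < 3"
  defines "a \<equiv> (k + 1) mod 3" and "b \<equiv> (k + 2) mod 3"
  shows "{i. i < 3 \<and> i \<noteq> k} = {a, b}" "a \<noteq> b" "3 - k - a = b" "3 - k - b = a"
    and "cyclic_mat w a k = - w b" "cyclic_mat w b k = w a" "cyclic_mat w k k = 0"
proof -
  consider "k = 0" | "k = 1" | "k = 2"
    using assms(1) by linarith
  then have "{i. i < 3 \<and> i \<noteq> k} = {a, b} \<and> a \<noteq> b \<and> 3 - k - a = b \<and> 3 - k - b = a
      \<and> cyclic_mat w a k = - w b \<and> cyclic_mat w b k = w a \<and> cyclic_mat w k k = 0"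
    by cases (auto simp: a_def b_def cyclic_mat_def numeral_2_eq_2)
  then show "{i. i < 3 \<and> i \<noteq> k} = {a, b}" "a \<noteq> b" "3 - k - a = b" "3 - k - b = a"
    "cyclic_mat w a k = - w b" "cyclic_mat w b k = w a" "cyclic_mat w k k = 0"
    by simp_all
qed

lemma mutate_cyclic_seed:
  assumes "k < 3" "\<sigma> = 1 \<or> \<sigma> = -1" "\<forall>i<3. i \<noteq> k \<longrightarrow> 0 < snd s i"
  shows "mutate k (cyclic_seed \<sigma> s) = cyclic_seed (- \<sigma>) (mutate_cyclic k s)"
proof -
  obtain x w where s: "s = (x, w)"
    by (cases s)
  define a where "a = (k + 1) mod 3"
  define b where "b = (k + 2) mod 3"
  note nb = cyclic_neighbours[OF assms(1), folded a_def b_def]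
  have ab: "a < 3" "b < 3" "a \<noteq> k" "b \<noteq> k"
    using nb(1) by blast+
  have w: "\<forall>i<3. i \<noteq> k \<longrightarrow> 0 < w i"
    using assms(3) by (simp add: s)
  then have "0 < w a" "0 < w b"
    using ab by auto
  define c where "c = (if \<sigma> = 1 then b else a)"
  define d where "d = (if \<sigma> = 1 then a else b)"
  have sign: "0 < \<sigma> * cyclic_mat w i k \<longleftrightarrow> i = c" "\<sigma> * cyclic_mat w i k < 0 \<longleftrightarrow> i = d"
    if "i = k \<or> i = a \<or> i = b" for i
    using that assms(2) nb(2,5-7) ab \<open>0 < w a\<close> \<open>0 < w b\<close> unfolding c_def d_def
    by (elim disjE; simp)+
  have three: "i = k \<or> i = a \<or> i = b" if "i < 3" for i
    using nb(1) that by blast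
  have "c < 3" "d < 3"
    using ab unfolding c_def d_def by simp_all
  then have pos: "{i. i < 3 \<and> 0 < \<sigma> * cyclic_mat w i k} = {c}"
    and neg: "{i. i < 3 \<and> \<sigma> * cyclic_mat w i k < 0} = {d}"
    by (auto dest: three simp: sign)
  have "(\<Prod>i\<in>{i. i < 3 \<and> 0 < \<sigma> * cyclic_mat w i k}. x i ^ nat (\<sigma> * cyclic_mat w i k))
      + (\<Prod>i\<in>{i. i < 3 \<and> \<sigma> * cyclic_mat w i k < 0}. x i ^ nat (- (\<sigma> * cyclic_mat w i k)))
      = (\<Sum>i\<in>{i. i < 3 \<and> i \<noteq> k}. x i ^ nat (w (3 - k - i)))"
    unfolding pos neg nb(1) using assms(2) nb(2-6) by (auto simp: c_def d_def)
  moreover have "- w k + (\<Sum>i\<in>{i. i < 3 \<and> 0 < \<sigma> * cyclic_mat w i k}. \<sigma> * cyclic_mat w i k * w i)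
      = (\<Prod>i\<in>{i. i < 3 \<and> i \<noteq> k}. w i) - w k"
    unfolding pos nb(1) using assms(2) nb(2,5,6) by (auto simp: c_def)
  ultimately show ?thesis
    using mut_mat_cyclic[OF assms(1,2) w]
    by (simp add: s mutate_def cyclic_seed_def mutate_cyclic_def exchange_def mut_weights_def)
qed

lemma reachable_seeds_initial: "s0 \<in> reachable_seeds s0"
  unfolding reachable_seeds_def mutate_seq_def by (rule CollectI, rule exI[of _ "[]"]) simp

lemma mutate_in_reachable_seeds:
  assumes "s \<in> reachable_seeds s0" "k < 3"
  shows "mutate k s \<in> reachable_seeds s0"
proof -
  obtain ks where "s = mutate_seq ks s0" "set ks \<subseteq> {0, 1, 2}"
    using assms(1) unfolding reachable_seeds_def by blast
  then have "mutate k s = mutate_seq (ks @ [k]) s0" "set (ks @ [k]) \<subseteq> {0, 1, 2}"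
    using assms(2) by (auto simp: mutate_seq_def)
  then show ?thesis
    unfolding reachable_seeds_def by blast
qed

lemma cyclic_seed_graded_cluster_var:
  assumes "cyclic_seed \<sigma> s \<in> reachable_seeds s0" "i < 3"
  shows "(fst s i, snd s i) \<in> graded_cluster_vars s0"
  using assms unfolding graded_cluster_vars_def cyclic_seed_def by blast

lemma Bmat_cyclic: "Bmat a = cyclic_mat (gvec a)"
  by (intro ext) (simp add: Bmat_def cyclic_mat_def gvec_def)

lemma initial_seed_cyclic: "(init_cluster, Bmat a, gvec a) = cyclic_seed 1 (init_cluster, gvec a)"
  by (simp add: cyclic_seed_def Bmat_cyclic)

lemma cyclic_seed_iterate_reachable:
  assumes "cyclic_seed 1 s \<in> reachable_seeds s0" "P (snd s)" "i < 3" "j < 3"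
    and step: "\<And>w. P w \<Longrightarrow> (\<forall>l<3. 0 < w l) \<and> (\<forall>l<3. 0 < mut_weights i w l)
      \<and> P (mut_weights j (mut_weights i w))"
  shows "cyclic_seed 1 (((mutate_cyclic j \<circ> mutate_cyclic i) ^^ n) s) \<in> reachable_seeds s0"
proof -
  define F :: "(nat \<Rightarrow> rf) \<times> (nat \<Rightarrow> int) \<Rightarrow> _"
    where "F = mutate_cyclic j \<circ> mutate_cyclic i"
  have "cyclic_seed 1 ((F ^^ n) s) \<in> reachable_seeds s0 \<and> P (snd ((F ^^ n) s))"
  proof (induction n)
    case 0
    then show ?case
      using assms(1,2) by simp
  next
    case (Suc n)
    define t where "t = (F ^^ n) s"
    have reach: "cyclic_seed 1 t \<in> reachable_seeds s0" and "P (snd t)"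
      using Suc unfolding t_def by blast+
    then have pos: "\<forall>l<3. 0 < snd t l" "\<forall>l<3. 0 < snd (mutate_cyclic i t) l"
      using step by simp_all
    have "mutate j (mutate i (cyclic_seed 1 t)) = cyclic_seed 1 (F t)"
      using mutate_cyclic_seed[OF assms(3), of 1 t] pos
        mutate_cyclic_seed[OF assms(4), of "-1" "mutate_cyclic i t"]
      by (simp add: F_def)
    moreover have "mutate j (mutate i (cyclic_seed 1 t)) \<in> reachable_seeds s0"
      using reach assms(3,4) by (intro mutate_in_reachable_seeds)
    moreover have "(F ^^ Suc n) s = F t" "snd (F t) = mut_weights j (mut_weights i (snd t))"
      by (simp_all add: t_def F_def)
    ultimately show ?case
      using step[OF \<open>P (snd t)\<close>] by simp
  qed
  then show ?thesis
    unfolding F_def ..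
qed

definition has_values ::
  "(nat \<Rightarrow> int) \<Rightarrow> (nat \<Rightarrow> rf) \<times> (nat \<Rightarrow> int) \<Rightarrow> (nat \<Rightarrow> real) \<times> (nat \<Rightarrow> int) \<Rightarrow> bool" where
  "has_values c s t \<longleftrightarrow> snd s = snd t \<and> (\<forall>i<3. has_value c (fst s i) (fst t i) \<and> 0 < fst t i)"

lemma exchange_pos:
  fixes r :: "nat \<Rightarrow> real"
  assumes "\<forall>i<3. 0 < r i" "k < 3"
  shows "0 < exchange k w r"
proof -
  have "{i. i < 3 \<and> i \<noteq> k} \<noteq> {}"
    using cyclic_neighbours(1)[OF assms(2)] by blast
  then have "0 < (\<Sum>i\<in>{i. i < 3 \<and> i \<noteq> k}. r i ^ nat (w (3 - k - i)))"
    using assms(1) by (intro sum_pos) auto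
  then show ?thesis
    using assms unfolding exchange_def by simp
qed

lemma has_value_exchange:
  assumes "\<forall>i<3. has_value c (x i) (r i)" "r k \<noteq> 0" "k < 3"
  shows "has_value c (exchange k w x) (exchange k w r)"
  unfolding exchange_def using assms
  by (intro has_value_divide has_value_sum has_value_power) auto

lemma has_values_mutate_cyclic:
  assumes "has_values c s t" "k < 3"
  shows "has_values c (mutate_cyclic k s) (mutate_cyclic k t)"
proof -
  have "has_value c (exchange k (snd s) (fst s)) (exchange k (snd t) (fst t))"
    "0 < exchange k (snd t) (fst t)"
    using assms has_value_exchange[of c "fst s" "fst t" k] exchange_pos[of "fst t" k]
    by (auto simp: has_values_def)
  then show ?thesis
    using assms unfolding has_values_def mutate_cyclic_def by auto
qed

lemma has_values_iterate:
  assumes "has_values c s t" "i < 3" "j < 3"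
  shows "has_values c (((mutate_cyclic j \<circ> mutate_cyclic i) ^^ n) s)
    (((mutate_cyclic j \<circ> mutate_cyclic i) ^^ n) t)"
  by (induction n) (simp_all add: assms has_values_mutate_cyclic)

lemma has_values_initial:
  assumes "\<forall>i<3. 0 < c i"
  shows "has_values c (init_cluster, w) (\<lambda>i. of_int (c i), w)"
  using assms has_value_init_cluster by (simp add: has_values_def)

lemma le_power_add_div:
  fixes x y z :: real
  assumes "1 \<le> y" "y \<le> x" "1 \<le> z" "2 \<le> n"
  shows "x \<le> (x ^ n + z ^ m) / y"
proof -
  have "x * y \<le> x ^ 2"
    using assms by (simp add: power2_eq_square mult_left_mono)
  also have "\<dots> \<le> x ^ n"
    using assms by (intro power_increasing) auto
  also have "\<dots> \<le> x ^ n + z ^ m"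
    using assms by simp
  finally show ?thesis
    using assms by (simp add: pos_le_divide_eq)
qed

lemma double_le_one_add_square_div:
  fixes x y :: real
  assumes "1 \<le> x" "2 * x \<le> y"
  shows "2 * y \<le> (1 + y ^ 2) / x"
proof -
  have "2 * y * x \<le> y * y"
    using assms by (simp add: mult_left_mono mult.commute mult.left_commute)
  then have "2 * y * x \<le> 1 + y ^ 2"
    by (simp add: power2_eq_square)
  then show ?thesis
    using assms by (simp add: pos_le_divide_eq)
qed

lemma mut_weights_gvec: "mut_weights 0 (gvec a) = gvec a" "mut_weights 2 (gvec a) = gvec a"
  by (auto simp: mut_weights_simps gvec_def)

lemma values_grow_under_mutation_02:
  fixes r :: "nat \<Rightarrow> real"
  assumes "r 1 = 1" "1 \<le> r 0" "2 * r 0 \<le> r 2"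
  shows "\<exists>x. ((mutate_cyclic 2 \<circ> mutate_cyclic 0) ^^ m) (r, gvec a) = (x, gvec a)
    \<and> x 1 = 1 \<and> r 0 + m \<le> x 0 \<and> 2 * x 0 \<le> x 2"
proof (induction m)
  case 0
  then show ?case
    using assms by simp
next
  case (Suc m)
  then obtain x where t: "((mutate_cyclic 2 \<circ> mutate_cyclic 0) ^^ m) (r, gvec a) = (x, gvec a)"
    and x: "x 1 = 1" "r 0 + m \<le> x 0" "2 * x 0 \<le> x 2"
    by blast
  define y0 where "y0 = (1 + x 2 ^ 2) / x 0"
  have "1 \<le> x 0"
    using assms(2) x(2) by linarith
  have step: "((mutate_cyclic 2 \<circ> mutate_cyclic 0) ^^ Suc m) (r, gvec a)
      = (x(0 := y0, 2 := (y0 ^ 2 + 1) / x 2), gvec a)"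
    using t x(1) by (simp add: mutate_cyclic_def exchange_simps mut_weights_gvec y0_def gvec_def)
  have "2 * x 2 \<le> y0"
    unfolding y0_def using \<open>1 \<le> x 0\<close> x(3) by (rule double_le_one_add_square_div)
  moreover have "2 * y0 \<le> (y0 ^ 2 + 1) / x 2"
    using double_le_one_add_square_div[of "x 2" y0] \<open>1 \<le> x 0\<close> x(3) calculation
    by (simp add: add.commute)
  ultimately show ?case
    unfolding step using x \<open>1 \<le> x 0\<close> by auto
qed

lemma values_grow_under_mutation_10:
  fixes r :: "nat \<Rightarrow> real"
  assumes "1 \<le> r 1" "r 1 \<le> r 0" "1 \<le> r 2" "2 \<le> w 2"
  shows "\<exists>x w'. ((mutate_cyclic 0 \<circ> mutate_cyclic 1) ^^ k) (r, w) = (x, w')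
    \<and> 1 \<le> x 1 \<and> x 1 \<le> x 0 \<and> 1 \<le> x 2 \<and> w' 2 = w 2 \<and> r 0 \<le> x 0"
proof (induction k)
  case 0
  then show ?case
    using assms by simp
next
  case (Suc k)
  then obtain x w' where t: "((mutate_cyclic 0 \<circ> mutate_cyclic 1) ^^ k) (r, w) = (x, w')"
    and x: "1 \<le> x 1" "x 1 \<le> x 0" "1 \<le> x 2" "w' 2 = w 2" "r 0 \<le> x 0"
    by blast
  define y1 where "y1 = (x 0 ^ nat (w' 2) + x 2 ^ nat (w' 0)) / x 1"
  define y0 where "y0 = (y1 ^ nat (w' 2) + x 2 ^ nat (w' 0 * w' 2 - w' 1)) / x 0"
  have step: "((mutate_cyclic 0 \<circ> mutate_cyclic 1) ^^ Suc k) (r, w)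
      = (x(1 := y1, 0 := y0), mut_weights 0 (mut_weights 1 w'))"
  proof -
    have "(mutate_cyclic 0 \<circ> mutate_cyclic 1) (x, w')
        = (x(1 := y1, 0 := y0), mut_weights 0 (mut_weights 1 w'))"
      unfolding comp_def mutate_cyclic_def fst_conv snd_conv exchange_simps mut_weights_simps
        y0_def y1_def
      by simp
    then show ?thesis
      using t by simp
  qed
  have n: "2 \<le> nat (w' 2)"
    using assms(4) x(4) by simp
  have "x 0 \<le> y1"
    unfolding y1_def using x(1-3) n by (rule le_power_add_div)
  moreover have "y1 \<le> y0"
    unfolding y0_def using x(1,2,3) calculation n by (intro le_power_add_div) auto
  ultimately show ?case
    unfolding step mut_weights_simps using x by auto
qed

lemma all_less_3: "(\<forall>l<3. P l) \<longleftrightarrow> P 0 \<and> P 1 \<and> P (2::nat)"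
  by (auto simp: less_Suc_eq numeral_eq_Suc)

definition increasing_weights :: "(nat \<Rightarrow> int) \<Rightarrow> bool" where
  "increasing_weights w \<longleftrightarrow> 3 \<le> w 2 \<and> 0 < w 1 \<and> w 1 < w 0"

lemma increasing_weights_mutate_10:
  assumes "increasing_weights w"
  shows "increasing_weights (mut_weights 0 (mut_weights 1 w))"
    "w 0 < mut_weights 0 (mut_weights 1 w) 0"
    and "\<forall>l<3. 0 < w l" "\<forall>l<3. 0 < mut_weights 1 w l"
proof -
  define u where "u = w 0 * w 2 - w 1"
  have w: "3 \<le> w 2" "0 < w 1" "w 1 < w 0"
    using assms unfolding increasing_weights_def by auto
  have w1: "mut_weights 1 w 0 = w 0" "mut_weights 1 w 1 = u" "mut_weights 1 w 2 = w 2"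
    unfolding mut_weights_simps u_def by simp_all
  have w': "mut_weights 0 (mut_weights 1 w) 2 = w 2" "mut_weights 0 (mut_weights 1 w) 1 = u"
    "mut_weights 0 (mut_weights 1 w) 0 = u * w 2 - w 0"
    unfolding mut_weights_simps u_def by simp_all
  have "3 * w 0 \<le> w 0 * w 2"
    using w by simp
  then have "w 0 < u"
    using w unfolding u_def by linarith
  moreover have "u * 3 \<le> u * w 2"
    using w calculation by (intro mult_left_mono) simp_all
  ultimately show "increasing_weights (mut_weights 0 (mut_weights 1 w))"
    "w 0 < mut_weights 0 (mut_weights 1 w) 0"
    using w unfolding increasing_weights_def w' by linarith+
  show "\<forall>l<3. 0 < w l" "\<forall>l<3. 0 < mut_weights 1 w l"
    unfolding all_less_3 w1 using w \<open>w 0 < u\<close> by simp_all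
qed

lemma increasing_weights_iterate:
  assumes "increasing_weights w"
  defines "W \<equiv> \<lambda>n. ((mut_weights 0 \<circ> mut_weights 1) ^^ n) w"
  shows "strict_mono (\<lambda>n. W n 0)"
proof -
  have "increasing_weights (W n)" for n
    unfolding W_def
    by (induction n) (simp_all del: One_nat_def add: assms increasing_weights_mutate_10(1))
  then show ?thesis
    unfolding strict_mono_Suc_iff
    by (simp del: One_nat_def add: W_def increasing_weights_mutate_10(2))
qed

lemma snd_iterate_mutate_cyclic:
  "snd (((mutate_cyclic j \<circ> mutate_cyclic i) ^^ n) s)
    = ((mut_weights j \<circ> mut_weights i) ^^ n) (snd s)"
  by (induction n) simp_all

lemma infinite_if_values_unbounded:
  assumes "\<And>m::nat. \<exists>v\<in>V. \<exists>r. has_value c v r \<and> real m \<le> r"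
  shows "infinite V"
proof
  assume "finite V"
  define bound where "bound = Max (insert 0 ((\<lambda>v. THE r. has_value c v r) ` V))"
  obtain m :: nat where "bound < real m"
    using reals_Archimedean2 by blast
  obtain v r where "v \<in> V" "has_value c v r" "real m \<le> r"
    using assms by blast
  then have "(THE r. has_value c v r) = r"
    using has_value_unique by blast
  then have "r \<le> bound"
    unfolding bound_def using \<open>finite V\<close> \<open>v \<in> V\<close> by (auto intro: Max_ge)
  then show False
    using \<open>bound < real m\<close> \<open>real m \<le> r\<close> by simp
qed

lemma alternating_mutations_reachable:
  fixes m k :: nat
  assumes "3 \<le> a"
  defines "s \<equiv> ((mutate_cyclic 2 \<circ> mutate_cyclic 0) ^^ m) (init_cluster, gvec a)"
  shows "snd s = gvec a"
    and "cyclic_seed 1 (((mutate_cyclic 0 \<circ> mutate_cyclic 1) ^^ k) s)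
      \<in> reachable_seeds (init_cluster, Bmat a, gvec a)"
proof -
  show "snd s = gvec a"
    unfolding s_def snd_iterate_mutate_cyclic by (induction m) (simp_all add: mut_weights_gvec)
  have "cyclic_seed 1 s \<in> reachable_seeds (init_cluster, Bmat a, gvec a)"
    unfolding s_def initial_seed_cyclic using assms(1)
    by (intro cyclic_seed_iterate_reachable[where P = "\<lambda>w. w = gvec a"] reachable_seeds_initial)
      (simp_all add: mut_weights_gvec all_less_3 gvec_def)
  moreover have "increasing_weights (snd s)"
    using assms(1) \<open>snd s = gvec a\<close> by (simp add: increasing_weights_def gvec_def)
  ultimately show "cyclic_seed 1 (((mutate_cyclic 0 \<circ> mutate_cyclic 1) ^^ k) s)
      \<in> reachable_seeds (init_cluster, Bmat a, gvec a)"
    by (intro cyclic_seed_iterate_reachable[where P = increasing_weights])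
      (simp_all del: One_nat_def add: increasing_weights_mutate_10)
qed

lemma cluster_variable_with_large_value:
  assumes "3 \<le> a"
  defines "c \<equiv> \<lambda>i::nat. if i = 2 then 2 else 1 :: int"
  shows "\<exists>v r. (v, (((mut_weights 0 \<circ> mut_weights 1) ^^ k) (gvec a)) 0)
      \<in> graded_cluster_vars (init_cluster, Bmat a, gvec a) \<and> has_value c v r \<and> real m \<le> r"
proof -
  define s1 where "s1 = ((mutate_cyclic 2 \<circ> mutate_cyclic 0) ^^ m) (init_cluster, gvec a)"
  define s2 where "s2 = ((mutate_cyclic 0 \<circ> mutate_cyclic 1) ^^ k) s1"
  define r where "r = (\<lambda>i. real_of_int (c i))"
  define t1 where "t1 = ((mutate_cyclic 2 \<circ> mutate_cyclic 0) ^^ m) (r, gvec a)"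
  define t2 where "t2 = ((mutate_cyclic 0 \<circ> mutate_cyclic 1) ^^ k) t1"
  have "has_values c (init_cluster, gvec a) (r, gvec a)"
    unfolding r_def by (rule has_values_initial) (simp add: c_def)
  then have "has_values c s2 t2"
    unfolding s1_def t1_def s2_def t2_def by (intro has_values_iterate) simp_all
  then have "has_value c (fst s2 0) (fst t2 0)"
    unfolding has_values_def by simp
  obtain x :: "nat \<Rightarrow> real" where "t1 = (x, gvec a)" "x 1 = 1" "1 + m \<le> x 0" "2 * x 0 \<le> x 2"
    using values_grow_under_mutation_02[of r m a] unfolding t1_def by (auto simp: r_def c_def)
  then have "real m \<le> fst t2 0"
    using values_grow_under_mutation_10[of x "gvec a" k] assms(1) unfolding t2_def
    by (auto simp: gvec_def)
  moreover have "(fst s2 0, snd s2 0) \<in> graded_cluster_vars (init_cluster, Bmat a, gvec a)"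
    using alternating_mutations_reachable[OF assms(1)] unfolding s2_def s1_def
    by (intro cyclic_seed_graded_cluster_var) simp_all
  moreover have "snd s2 = ((mut_weights 0 \<circ> mut_weights 1) ^^ k) (gvec a)"
    using alternating_mutations_reachable(1)[OF assms(1)]
    unfolding s2_def s1_def snd_iterate_mutate_cyclic by simp
  ultimately show ?thesis
    using \<open>has_value c (fst s2 0) (fst t2 0)\<close> by auto
qed

theorem mainTheorem18:
  fixes a :: int
  assumes "a \<ge> 3"
  shows "infinite {d :: int. infinite {v. (v, d) \<in> graded_cluster_vars (init_cluster, Bmat a, gvec a)}}"
proof -
  define W where "W = (\<lambda>k. ((mut_weights 0 \<circ> mut_weights 1) ^^ k) (gvec a))"
  have "strict_mono (\<lambda>k. W k 0)"
    unfolding W_def using assms by (intro increasing_weights_iterate) (simp add: increasing_weights_def gvec_def)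
  then have "infinite (range (\<lambda>k. W k 0))"
    using range_inj_infinite strict_mono_imp_inj_on by blast
  moreover have "infinite {v. (v, W k 0) \<in> graded_cluster_vars (init_cluster, Bmat a, gvec a)}" for k
    using cluster_variable_with_large_value[OF assms] unfolding W_def
    by (intro infinite_if_values_unbounded) blast
  then have "range (\<lambda>k. W k 0) \<subseteq> {d. infinite {v. (v, d) \<in> graded_cluster_vars (init_cluster, Bmat a, gvec a)}}"
    by blast
  ultimately show ?thesis
    using infinite_super by blast
qed

end
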